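(* In the compulsory constrained two-facility location game described in the context, Mechanism 2 — which on reported profile $\mathbf{x}$ outputs a pair $(y_1,y_2)\in\arg\min_{(s_1,s_2)\in AP}\max_{j\in\{1,2\}}|s_j-\mathrm{lt}(\mathbf{x})|$, where $\mathrm{lt}(\mathbf{x})=\min_i x_i$, breaking ties in any deterministic way — is group strategyproof and has approximation ratio exactly $3$ under the maximum cost objective.
   Context: An instance consists of $n$ agents with private locations $x_1,\dots,x_n\in\mathbb{R}$, each served by both facilities $F_1,F_2$, and a finite multiset $A=\{a_1\le\dots\le a_m\}$, $m\ge2$, of real alternative locations. A deterministic mechanism maps reported locations to $(y_1,y_2)$ with $y_1\in A$, $y_2\in A\setminus\{y_1\}$ (one copy removed). $AP=\{(a_1,a_2),\dots,(a_{m-1},a_m)\}$. Agent $j$'s cost is $\max\{|y_1-x_j|,|y_2-x_j|\}$; the maximum cost is the maximum of agents' costs. Group strategyproof: for every true profile, every nonempty coalition $S$ and every joint misreport of $S$'s locations, some member of $S$ does not strictly decrease her true cost. The approximation ratio is the supremum over instances of the mechanism's maximum cost divided by the optimal maximum cost over feasible outcomes. *)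

theory Defs
  imports Complex_Main "HOL-Library.Multiset"
begin

(* The multiset A of alternatives is represented by the sorted list
   [a_1, ..., a_m]; copies are distinguished by their index. *)

definition valid_alts :: "real list \<Rightarrow> bool" where
  "valid_alts A \<longleftrightarrow> sorted A \<and> length A \<ge> 2"

definition feasible :: "real list \<Rightarrow> (real \<times> real) set" where
  "feasible A = {(y1, y2). y1 \<in># mset A \<and> y2 \<in># mset A - {#y1#}}"

definition AP :: "real list \<Rightarrow> (real \<times> real) set" where
  "AP A = {(A ! i, A ! (Suc i)) | i. Suc i < length A}"

definition agent_cost :: "real \<Rightarrow> real \<times> real \<Rightarrow> real" where
  "agent_cost xj y = max \<bar>fst y - xj\<bar> \<bar>snd y - xj\<bar>"

definition max_cost :: "nat \<Rightarrow> (nat \<Rightarrow> real) \<Rightarrow> real \<times> real \<Rightarrow> real" where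
  "max_cost n x y = Max ((\<lambda>j. agent_cost (x j) y) ` {..<n})"

definition opt_cost :: "real list \<Rightarrow> nat \<Rightarrow> (nat \<Rightarrow> real) \<Rightarrow> real" where
  "opt_cost A n x = Min (max_cost n x ` feasible A)"

definition lt :: "nat \<Rightarrow> (nat \<Rightarrow> real) \<Rightarrow> real" where
  "lt n x = Min (x ` {..<n})"

definition mech2_cands :: "real list \<Rightarrow> real \<Rightarrow> (real \<times> real) set" where
  "mech2_cands A l = {p \<in> AP A. \<forall>q \<in> AP A. agent_cost l p \<le> agent_cost l q}"

(* Deterministic tie-breaking: a fixed priority over the pairs of AP,
   given by a ranking r that is injective on AP A (smaller rank wins). *)
definition tiebreak_ok :: "real list \<Rightarrow> (real \<times> real \<Rightarrow> nat) \<Rightarrow> bool" where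
  "tiebreak_ok A r \<longleftrightarrow> inj_on r (AP A)"

definition mech2 :: "real list \<Rightarrow> (real \<times> real \<Rightarrow> nat) \<Rightarrow> nat \<Rightarrow> (nat \<Rightarrow> real) \<Rightarrow> real \<times> real" where
  "mech2 A r n x = (THE p. p \<in> mech2_cands A (lt n x) \<and>
                       (\<forall>q \<in> mech2_cands A (lt n x). r p \<le> r q))"

definition group_strategyproof :: "nat \<Rightarrow> ((nat \<Rightarrow> real) \<Rightarrow> real \<times> real) \<Rightarrow> bool" where
  "group_strategyproof n M \<longleftrightarrow>
     (\<forall>x x' S. S \<noteq> {} \<and> S \<subseteq> {..<n} \<and> (\<forall>i \<in> {..<n} - S. x' i = x i) \<longrightarrow>
        (\<exists>j \<in> S. agent_cost (x j) (M x') \<ge> agent_cost (x j) (M x)))"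

definition approx_ratio :: "(real list \<Rightarrow> real \<times> real \<Rightarrow> nat) \<Rightarrow> real" where
  "approx_ratio R = Sup {max_cost n x (mech2 A (R A) n x) / opt_cost A n x | A n x.
       valid_alts A \<and> n \<ge> 1 \<and> opt_cost A n x > 0}"

end

theory Submission
  imports Defs
begin

(* Mechanism 2 depends on the profile only through the leftmost location l.  For a pair
   p = (a, b) with a <= b the cost at s is |s - (a + b)/2| + (b - a)/2, so the difference of the
   costs of two such pairs is a monotone function of s.

   Group strategyproofness: if a coalition moves l to the right, the agent at the old l belongs to
   it, and the old outcome was optimal at her location.  If it moves l to the left, to l', the agent
   reported at l' belongs to it and truly sits at some t >= l.  With d(s) the cost of the old outcome
   minus that of the new one, d(l) <= 0 <= d(l').  If d is nonincreasing then d(t) <= 0; if it is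
   nondecreasing, both outcomes are optimal at both l and l', so the tie-breaking selects the same
   pair both times.

   Ratio 3: every feasible outcome (a_i, a_k), i < k, is dominated everywhere by the adjacent pair
   (a_i, a_(i+1)), so the outcome costs at most OPT at l, and every agent lies within 2 OPT of l.
   For the alternatives -1, -1, 1 + e, 1 + e and agents at 0 and 2 the mechanism selects (-1, -1) at
   cost 3 while (1 + e, 1 + e) costs 1 + e. *)

lemma feasible_nth:
  assumes "(y1, y2) \<in> feasible A"
  obtains i k where "i < length A" "k < length A" "i \<noteq> k" "A ! i = y1" "A ! k = y2"
proof -
  obtain i where i: "i < length A" "A ! i = y1"
    using assms by (auto simp: feasible_def in_set_conv_nth)
  then have "A = take i A @ y1 # drop (Suc i) A"
    using id_take_nth_drop by metis
  then have "mset A - {#y1#} = mset (take i A @ drop (Suc i) A)"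
    by (metis add_mset_remove_trivial mset.simps(2) mset_append union_mset_add_mset_right)
  then have "y2 \<in> set (take i A) \<or> y2 \<in> set (drop (Suc i) A)"
    using assms by (auto simp: feasible_def)
  then show thesis
  proof
    assume "y2 \<in> set (take i A)"
    then obtain k where "k < i" "A ! k = y2" by (auto simp: in_set_conv_nth)
    then show thesis using that[of i k] i by auto
  next
    assume "y2 \<in> set (drop (Suc i) A)"
    then obtain k where "k < length A - Suc i" "A ! (Suc i + k) = y2"
      by (auto simp: in_set_conv_nth)
    then show thesis using that[of i "Suc i + k"] i by auto
  qed
qed

lemma finite_feasible: "finite (feasible A)"
proof (rule finite_subset)
  show "feasible A \<subseteq> set A \<times> set A"
    by (auto simp: feasible_def dest: in_diffD)
qed simp

lemma feasible_nonempty: "length A \<ge> 2 \<Longrightarrow> feasible A \<noteq> {}"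
  by (cases A rule: remdups_adj.cases) (auto simp: feasible_def)

lemma AP_eq_image: "AP A = (\<lambda>i. (A ! i, A ! Suc i)) ` {..<length A - 1}"
  by (force simp: AP_def)

lemma finite_AP: "finite (AP A)"
  by (simp add: AP_eq_image)

lemma AP_nonempty: "length A \<ge> 2 \<Longrightarrow> AP A \<noteq> {}"
  by (auto simp: AP_def intro!: exI[of _ 0])

lemma AP_fst_le_snd: "sorted A \<Longrightarrow> p \<in> AP A \<Longrightarrow> fst p \<le> snd p"
  by (auto simp: AP_def sorted_iff_nth_mono)

lemma agent_cost_swap: "agent_cost s (b, a) = agent_cost s (a, b)"
  by (simp add: agent_cost_def max.commute)

lemma agent_cost_le_if_between:
  "a \<le> b \<Longrightarrow> b \<le> c \<Longrightarrow> agent_cost s (a, b) \<le> agent_cost s (a, c)"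
  by (auto simp: agent_cost_def)

lemma AP_dominates_feasible:
  assumes "sorted A" "y \<in> feasible A"
  obtains p where "p \<in> AP A" "\<And>s. agent_cost s p \<le> agent_cost s y"
proof -
  obtain i k where ik: "i < k" "k < length A" "\<And>s. agent_cost s y = agent_cost s (A ! i, A ! k)"
  proof -
    obtain i k where "i < length A" "k < length A" "i \<noteq> k" "y = (A ! i, A ! k)"
      using assms(2) feasible_nth by (metis prod.collapse)
    then show thesis
      using that[of i k] that[of k i] by (metis agent_cost_swap linorder_neqE_nat)
  qed
  have "A ! i \<le> A ! Suc i" "A ! Suc i \<le> A ! k"
    using ik assms(1) by (auto simp: sorted_iff_nth_mono)
  moreover have "(A ! i, A ! Suc i) \<in> AP A"
    using ik unfolding AP_def by auto
  ultimately show thesis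
    using that ik(3) agent_cost_le_if_between by metis
qed

lemma agent_cost_eq_midpoint: "a \<le> b \<Longrightarrow> agent_cost s (a, b) = \<bar>s - (a + b) / 2\<bar> + (b - a) / 2"
  by (auto simp: agent_cost_def max_def abs_if field_simps)

lemma mono_abs_diff: "c \<le> c' \<Longrightarrow> mono (\<lambda>s::real. \<bar>s - c\<bar> - \<bar>s - c'\<bar>)"
  by (auto simp: mono_def)

lemma agent_cost_diff_mono_or_antimono:
  assumes "fst p \<le> snd p" "fst q \<le> snd q"
  shows "mono (\<lambda>s. agent_cost s p - agent_cost s q) \<or> antimono (\<lambda>s. agent_cost s p - agent_cost s q)"
proof -
  obtain a b c d where p: "p = (a, b)" "a \<le> b" and q: "q = (c, d)" "c \<le> d"
    using assms by (metis prod.collapse)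
  consider "(a + b) / 2 \<le> (c + d) / 2" | "(c + d) / 2 \<le> (a + b) / 2" by linarith
  then show ?thesis
  proof cases
    case 1
    then show ?thesis
      using mono_abs_diff[OF 1] by (auto simp: p q agent_cost_eq_midpoint mono_def)
  next
    case 2
    then show ?thesis
      using mono_abs_diff[OF 2] by (auto simp: p q agent_cost_eq_midpoint mono_def antimono_def)
  qed
qed

lemma agent_cost_le_add_dist: "agent_cost t p \<le> agent_cost s p + \<bar>t - s\<bar>"
  by (auto simp: agent_cost_def)

lemma dist_le_agent_cost_add: "\<bar>s - t\<bar> \<le> agent_cost s y + agent_cost t y"
  by (auto simp: agent_cost_def)

lemma lt_le: "j < n \<Longrightarrow> lt n x \<le> x j"
  by (simp add: lt_def)

lemma lt_attained: "n \<ge> 1 \<Longrightarrow> \<exists>j<n. x j = lt n x"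
proof -
  assume "n \<ge> 1"
  then have "lt n x \<in> x ` {..<n}"
    unfolding lt_def by (intro Min_in) (auto simp: lessThan_empty_iff)
  then show ?thesis by auto
qed

lemma lt_less_imp_deviator:
  assumes "n \<ge> 1" "\<forall>i \<in> {..<n} - S. x' i = x i" "lt n x' < lt n x"
  obtains j where "j \<in> S" "j < n" "x' j = lt n x'"
proof -
  obtain j where j: "j < n" "x' j = lt n x'"
    using lt_attained[OF assms(1)] by blast
  have "j \<in> S"
  proof (rule ccontr)
    assume "j \<notin> S"
    then have "lt n x \<le> x' j" using assms(2) j(1) lt_le[of j n x] by auto
    then show False using assms(3) j(2) by simp
  qed
  then show thesis using that j by blast
qed

lemma agent_cost_le_max_cost: "j < n \<Longrightarrow> agent_cost (x j) y \<le> max_cost n x y"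
  unfolding max_cost_def by (intro Max_ge) auto

lemma max_cost_le: "n \<ge> 1 \<Longrightarrow> (\<And>j. j < n \<Longrightarrow> agent_cost (x j) y \<le> c) \<Longrightarrow> max_cost n x y \<le> c"
  unfolding max_cost_def by (subst Max_le_iff) (auto simp: lessThan_empty_iff)

lemma opt_cost_le: "y \<in> feasible A \<Longrightarrow> opt_cost A n x \<le> max_cost n x y"
  unfolding opt_cost_def using finite_feasible by (intro Min_le) auto

lemma opt_cost_attained:
  assumes "length A \<ge> 2"
  obtains y where "y \<in> feasible A" "opt_cost A n x = max_cost n x y"
proof -
  have "opt_cost A n x \<in> max_cost n x ` feasible A"
    unfolding opt_cost_def using finite_feasible feasible_nonempty[OF assms] by (intro Min_in) auto
  then show thesis using that by blast
qed

definition best_AP :: "real list \<Rightarrow> (real \<times> real \<Rightarrow> nat) \<Rightarrow> real \<Rightarrow> real \<times> real" where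
  "best_AP A r l = (THE p. p \<in> mech2_cands A l \<and> (\<forall>q \<in> mech2_cands A l. r p \<le> r q))"

lemma mech2_eq_best_AP: "mech2 A r n x = best_AP A r (lt n x)"
  by (simp add: mech2_def best_AP_def)

lemma mech2_cands_nonempty:
  assumes "length A \<ge> 2"
  shows "mech2_cands A l \<noteq> {}"
proof -
  let ?p = "arg_min_on (agent_cost l) (AP A)"
  have "?p \<in> mech2_cands A l"
    using arg_min_if_finite[OF finite_AP AP_nonempty[OF assms], of "agent_cost l"]
    unfolding mech2_cands_def by (auto simp: not_less)
  then show ?thesis by blast
qed

lemma best_AP:
  assumes "length A \<ge> 2" "inj_on r (AP A)"
  shows best_AP_in_cands: "best_AP A r l \<in> mech2_cands A l"
    and best_AP_rank_le: "q \<in> mech2_cands A l \<Longrightarrow> r (best_AP A r l) \<le> r q"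
proof -
  let ?C = "mech2_cands A l"
  have "finite ?C" using finite_AP[of A] unfolding mech2_cands_def by auto
  from arg_min_if_finite[OF this mech2_cands_nonempty[OF assms(1)], of r]
  have "\<exists>p. p \<in> ?C \<and> (\<forall>q \<in> ?C. r p \<le> r q)"
    by (intro exI[of _ "arg_min_on r ?C"]) (auto simp: not_less)
  moreover have "p = p'" if "p \<in> ?C" "p' \<in> ?C" "r p \<le> r p'" "r p' \<le> r p" for p p'
    using that assms(2) inj_onD[of r "AP A" p p'] by (auto simp: mech2_cands_def)
  ultimately have "\<exists>!p. p \<in> ?C \<and> (\<forall>q \<in> ?C. r p \<le> r q)" by blast
  from theI'[OF this] show "best_AP A r l \<in> ?C" "q \<in> ?C \<Longrightarrow> r (best_AP A r l) \<le> r q"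
    unfolding best_AP_def by auto
qed

lemma best_AP_in_AP: "length A \<ge> 2 \<Longrightarrow> inj_on r (AP A) \<Longrightarrow> best_AP A r l \<in> AP A"
  using best_AP_in_cands[of A r l] unfolding mech2_cands_def by blast

lemma best_AP_cost_le:
  "length A \<ge> 2 \<Longrightarrow> inj_on r (AP A) \<Longrightarrow> q \<in> AP A \<Longrightarrow> agent_cost l (best_AP A r l) \<le> agent_cost l q"
  using best_AP_in_cands[of A r l] unfolding mech2_cands_def by blast

lemma best_AP_left_shift:
  assumes A: "valid_alts A" and r: "inj_on r (AP A)" and "l' < l" "l \<le> t"
  shows "agent_cost t (best_AP A r l) \<le> agent_cost t (best_AP A r l')"
proof -
  have len: "length A \<ge> 2" and sorted: "sorted A" using A by (auto simp: valid_alts_def)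
  define p where "p = best_AP A r l"
  define q where "q = best_AP A r l'"
  define d where "d = (\<lambda>s. agent_cost s p - agent_cost s q)"
  have p: "p \<in> mech2_cands A l" and q: "q \<in> mech2_cands A l'"
    unfolding p_def q_def using best_AP_in_cands[OF len r] by auto
  then have p_AP: "p \<in> AP A" and q_AP: "q \<in> AP A" by (auto simp: mech2_cands_def)
  have "d l \<le> 0" "0 \<le> d l'"
    using p q p_AP q_AP by (auto simp: d_def mech2_cands_def)
  have "mono d \<or> antimono d"
    unfolding d_def
    by (rule agent_cost_diff_mono_or_antimono[OF AP_fst_le_snd[OF sorted p_AP] AP_fst_le_snd[OF sorted q_AP]])
  then consider "mono d" | "antimono d" by blast
  then show ?thesis
  proof cases
    case 1
    from 1 \<open>l' < l\<close> have "d l' \<le> d l" by (simp add: monoD)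
    then have "d l = 0" "d l' = 0" using \<open>d l \<le> 0\<close> \<open>0 \<le> d l'\<close> by auto
    then have "q \<in> mech2_cands A l" "p \<in> mech2_cands A l'"
      using p q p_AP q_AP by (auto simp: d_def mech2_cands_def)
    then have "r p \<le> r q" "r q \<le> r p"
      unfolding p_def q_def using best_AP_rank_le[OF len r] by auto
    then have "p = q" using inj_onD[OF r _ p_AP q_AP] by simp
    then show ?thesis by (simp add: p_def q_def)
  next
    case 2
    from 2 \<open>l \<le> t\<close> have "d t \<le> d l" by (rule antimonoD)
    then show ?thesis using \<open>d l \<le> 0\<close> by (simp add: d_def p_def q_def)
  qed
qed

lemma group_strategyproof_mech2:
  assumes A: "valid_alts A" and r: "inj_on r (AP A)" and n: "n \<ge> 1"
  shows "group_strategyproof n (mech2 A r n)"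
  unfolding group_strategyproof_def
proof (intro allI impI)
  fix x x' :: "nat \<Rightarrow> real" and S
  assume "S \<noteq> {} \<and> S \<subseteq> {..<n} \<and> (\<forall>i \<in> {..<n} - S. x' i = x i)"
  then have S: "S \<noteq> {}" and same: "\<forall>i \<in> {..<n} - S. x' i = x i" "\<forall>i \<in> {..<n} - S. x i = x' i"
    by auto
  have len: "length A \<ge> 2" using A by (simp add: valid_alts_def)
  let ?p = "best_AP A r (lt n x)" and ?p' = "best_AP A r (lt n x')"
  have "\<exists>j\<in>S. agent_cost (x j) ?p \<le> agent_cost (x j) ?p'"
  proof -
    consider "lt n x' = lt n x" | "lt n x < lt n x'" | "lt n x' < lt n x" by linarith
    then show ?thesis
    proof cases
      case 1
      then show ?thesis using S by auto
    next
      case 2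
      then obtain j where "j \<in> S" "x j = lt n x"
        using lt_less_imp_deviator[OF n same(2)] by blast
      moreover have "agent_cost (lt n x) ?p \<le> agent_cost (lt n x) ?p'"
        by (rule best_AP_cost_le[OF len r best_AP_in_AP[OF len r]])
      ultimately show ?thesis by (intro bexI[of _ j]) simp_all
    next
      case 3
      then obtain j where "j \<in> S" "j < n"
        using lt_less_imp_deviator[OF n same(1)] by blast
      moreover have "agent_cost (x j) ?p \<le> agent_cost (x j) ?p'"
        by (rule best_AP_left_shift[OF A r 3 lt_le[OF \<open>j < n\<close>]])
      ultimately show ?thesis by auto
    qed
  qed
  then show "\<exists>j\<in>S. agent_cost (x j) (mech2 A r n x) \<le> agent_cost (x j) (mech2 A r n x')"
    by (simp add: mech2_eq_best_AP)
qed

lemma max_cost_mech2_le: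
  assumes A: "valid_alts A" and r: "inj_on r (AP A)" and n: "n \<ge> 1"
  shows "max_cost n x (mech2 A r n x) \<le> 3 * opt_cost A n x"
proof (rule max_cost_le[OF n])
  have len: "length A \<ge> 2" and sorted: "sorted A" using A by (auto simp: valid_alts_def)
  obtain y where y: "y \<in> feasible A" "opt_cost A n x = max_cost n x y"
    using opt_cost_attained[OF len] by blast
  obtain q where q: "q \<in> AP A" "\<And>s. agent_cost s q \<le> agent_cost s y"
    using AP_dominates_feasible[OF sorted y(1)] by blast
  obtain j0 where j0: "j0 < n" "x j0 = lt n x" using lt_attained[OF n] by blast
  let ?l = "lt n x" and ?p = "mech2 A r n x"
  have cost_y_le: "agent_cost (x j) y \<le> opt_cost A n x" if "j < n" for j
    using agent_cost_le_max_cost[OF that] y(2) by simp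
  have p_l: "agent_cost ?l ?p \<le> agent_cost ?l y"
    using order_trans[OF best_AP_cost_le[OF len r q(1)] q(2)] by (simp add: mech2_eq_best_AP)
  fix j assume "j < n"
  have "agent_cost (x j) ?p \<le> agent_cost ?l ?p + \<bar>x j - ?l\<bar>"
    by (rule agent_cost_le_add_dist)
  also have "\<dots> \<le> agent_cost ?l y + (agent_cost (x j) y + agent_cost ?l y)"
    using p_l dist_le_agent_cost_add[of "x j" ?l y] by linarith
  also have "\<dots> \<le> 3 * opt_cost A n x"
    using cost_y_le[OF j0(1)] cost_y_le[OF \<open>j < n\<close>] j0(2) by simp
  finally show "agent_cost (x j) ?p \<le> 3 * opt_cost A n x" .
qed

definition tight_alts :: "real \<Rightarrow> real list" where
  "tight_alts e = [-1, -1, 1 + e, 1 + e]"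

definition tight_profile :: "nat \<Rightarrow> real" where
  "tight_profile j = (if j = 0 then 0 else 2)"

lemma valid_alts_tight: "0 \<le> e \<Longrightarrow> valid_alts (tight_alts e)"
  by (simp add: valid_alts_def tight_alts_def)

lemma mech2_tight:
  assumes "0 < e" "inj_on r (AP (tight_alts e))"
  shows "mech2 (tight_alts e) r 2 tight_profile = (-1, -1)"
proof -
  have len: "length (tight_alts e) \<ge> 2" by (simp add: tight_alts_def)
  have AP: "AP (tight_alts e) = {(-1, -1), (-1, 1 + e), (1 + e, 1 + e)}"
    by (auto simp: AP_def tight_alts_def less_Suc_eq numeral_3_eq_3 numeral_2_eq_2 nth_Cons'
        intro: exI[of _ 0] exI[of _ 1] exI[of _ 2])
  have "lt 2 tight_profile = 0"
    by (simp add: lt_def tight_profile_def numeral_2_eq_2 lessThan_Suc)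
  moreover have "best_AP (tight_alts e) r 0 = (-1, -1)"
  proof -
    have "best_AP (tight_alts e) r 0 \<in> AP (tight_alts e)"
      by (rule best_AP_in_AP[OF len assms(2)])
    moreover have "agent_cost 0 (best_AP (tight_alts e) r 0) \<le> agent_cost 0 (-1, -1)"
      using best_AP_cost_le[OF len assms(2)] AP by simp
    ultimately show ?thesis
      using assms(1) by (auto simp: AP agent_cost_def)
  qed
  ultimately show ?thesis by (simp add: mech2_eq_best_AP)
qed

lemma max_cost_tight: "max_cost 2 tight_profile (-1, -1) = 3"
proof (rule antisym)
  show "max_cost 2 tight_profile (-1, -1) \<le> 3"
    by (rule max_cost_le) (auto simp: agent_cost_def tight_profile_def)
  show "3 \<le> max_cost 2 tight_profile (-1, -1)"
    using agent_cost_le_max_cost[of 1 2 tight_profile "(-1, -1)"] by (simp add: agent_cost_def tight_profile_def)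
qed

lemma opt_cost_tight:
  assumes "0 \<le> e"
  shows "1 \<le> opt_cost (tight_alts e) 2 tight_profile" "opt_cost (tight_alts e) 2 tight_profile \<le> 1 + e"
proof -
  have "length (tight_alts e) \<ge> 2" by (simp add: tight_alts_def)
  then obtain y where y: "opt_cost (tight_alts e) 2 tight_profile = max_cost 2 tight_profile y"
    using opt_cost_attained by blast
  have "\<bar>tight_profile 0 - tight_profile 1\<bar> \<le> agent_cost (tight_profile 0) y + agent_cost (tight_profile 1) y"
    by (rule dist_le_agent_cost_add)
  then show "1 \<le> opt_cost (tight_alts e) 2 tight_profile"
    using agent_cost_le_max_cost[of 0 2 tight_profile y] agent_cost_le_max_cost[of 1 2 tight_profile y] y
    by (simp add: tight_profile_def)
  have "(1 + e, 1 + e) \<in> feasible (tight_alts e)"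
    by (simp add: feasible_def tight_alts_def)
  then have "opt_cost (tight_alts e) 2 tight_profile \<le> max_cost 2 tight_profile (1 + e, 1 + e)"
    by (rule opt_cost_le)
  also have "\<dots> \<le> 1 + e"
    by (rule max_cost_le) (use assms in \<open>auto simp: agent_cost_def tight_profile_def\<close>)
  finally show "opt_cost (tight_alts e) 2 tight_profile \<le> 1 + e" .
qed

lemma ratio_tight:
  assumes "0 < e" "inj_on r (AP (tight_alts e))"
  shows "3 / (1 + e) \<le>
    max_cost 2 tight_profile (mech2 (tight_alts e) r 2 tight_profile) / opt_cost (tight_alts e) 2 tight_profile"
proof -
  have "3 / (1 + e) \<le> 3 / opt_cost (tight_alts e) 2 tight_profile"
    using opt_cost_tight[of e] assms(1) by (intro divide_left_mono) auto
  then show ?thesis by (simp add: mech2_tight[OF assms] max_cost_tight)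
qed

lemma le_if_div_one_plus_le:
  fixes c y :: real
  assumes "\<And>e. 0 < e \<Longrightarrow> c / (1 + e) \<le> y"
  shows "c \<le> y"
proof -
  have "((\<lambda>e. c / (1 + e)) \<longlongrightarrow> c / (1 + 0)) (at_right 0)"
    by (intro tendsto_intros) auto
  then have "c / (1 + 0) \<le> y"
    by (rule tendsto_upperbound) (auto intro: eventually_mono[OF eventually_at_right_less] assms)
  then show ?thesis by simp
qed

lemma approx_ratio_mech2:
  assumes r: "\<And>A. inj_on (R A) (AP A)"
  shows "approx_ratio R = 3"
proof -
  let ?ratios = "{max_cost n x (mech2 A (R A) n x) / opt_cost A n x | A n x.
       valid_alts A \<and> n \<ge> 1 \<and> opt_cost A n x > 0}"
  have tight_in: "max_cost 2 tight_profile (mech2 (tight_alts e) (R (tight_alts e)) 2 tight_profile)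
      / opt_cost (tight_alts e) 2 tight_profile \<in> ?ratios" if "0 < e" for e :: real
  proof -
    have "valid_alts (tight_alts e)" "opt_cost (tight_alts e) 2 tight_profile > 0"
      using that valid_alts_tight opt_cost_tight(1)[of e] by auto
    then show ?thesis
      by (intro CollectI exI[of _ "tight_alts e"] exI[of _ "2::nat"] exI[of _ tight_profile]) auto
  qed
  show ?thesis
    unfolding approx_ratio_def
  proof (rule cSup_eq_non_empty)
    show "?ratios \<noteq> {}" using tight_in[OF zero_less_one] by auto
    show "v \<le> 3" if ratio: "v \<in> ?ratios" for v
    proof -
      obtain A n x where v: "v = max_cost n x (mech2 A (R A) n x) / opt_cost A n x"
        and A: "valid_alts A" and n: "n \<ge> 1" and pos: "opt_cost A n x > 0"
        using ratio by blast
      show ?thesis using max_cost_mech2_le[OF A r n, of x] pos unfolding v by (simp add: divide_le_eq)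
    qed
    show "3 \<le> y" if ub: "\<And>v. v \<in> ?ratios \<Longrightarrow> v \<le> y" for y
    proof (rule le_if_div_one_plus_le)
      fix e :: real assume "0 < e"
      then show "3 / (1 + e) \<le> y" using ratio_tight[OF _ r] ub[OF tight_in] by fastforce
    qed
  qed
qed

theorem theorem4:
  fixes R :: "real list \<Rightarrow> real \<times> real \<Rightarrow> nat"
  assumes "\<And>A. tiebreak_ok A (R A)"
  shows "(\<forall>A n. valid_alts A \<and> n \<ge> 1 \<longrightarrow> group_strategyproof n (mech2 A (R A) n))
         \<and> approx_ratio R = 3"
proof
  have r: "inj_on (R A) (AP A)" for A using assms by (simp add: tiebreak_ok_def)
  show "\<forall>A n. valid_alts A \<and> n \<ge> 1 \<longrightarrow> group_strategyproof n (mech2 A (R A) n)"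
    using group_strategyproof_mech2[OF _ r] by blast
  show "approx_ratio R = 3"
    using approx_ratio_mech2[OF r] .
qed

end
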